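(* Assume the Hashimoto matrix $B$ is irreducible. Let $\mathbf{p}:[0,1]\to(0,1]^E$ be continuous and set $\rho(\lambda):=\rho\big(B^T\mathrm{diag}(\mathbf{p}(\lambda))\big)$. Suppose a continuous phase transition occurs at $\lambda_c\in[0,1)$, i.e. $\mathbf{Q}(\mathbf{p}(\lambda))\to\mathbf{1}$ as $\lambda\to\lambda_c$, and there is a sequence $\lambda_n\to\lambda_c$ with $\mathbf{Q}(\mathbf{p}(\lambda_n))\neq\mathbf{1}$ for all $n$. Then $\rho(\lambda_c)=1$.
   Context: $\mathcal{G}=(V,E)$ is a finite directed graph, edges written $i\to j$, $M=|E|$; $\mathcal{N}^-(j)=\{k:\,k\to j\in E\}$. The Hashimoto matrix is $B_{i\to j,\,k\to l}=\delta_{jk}(1-\delta_{il})$; it is irreducible iff the directed graph on $E$ with an arc from $e$ to $e'$ whenever $B_{e,e'}\neq 0$ is strongly connected. $\rho$ denotes spectral radius. For $\mathbf{p}\in[0,1]^E$ define $\mathbf{F}(\cdot;\mathbf{p}):[0,1]^E\to[0,1]^E$ componentwise: for the edge $j\to i$, $$F_{j\to i}(\mathbf{y};\mathbf{p})=\prod_{k\in\mathcal{N}^-(j)\setminus\{i\}}\big(1-p_{k\to j}+p_{k\to j}\,y_{k\to j}\big)$$ (empty product $=1$), so that $\mathbf{F}'(\mathbf{1};\mathbf{p})=B^T\mathrm{diag}(\mathbf{p})$. $\mathbf{Q}(\mathbf{p})$ denotes the componentwise smallest fixed point of $\mathbf{F}(\cdot;\mathbf{p})$ in $[0,1]^E$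 (limit of iterates of $\mathbf{F}$ from $\mathbf{0}$). *)

theory Defs
  imports Complex_Main "Jordan_Normal_Form.Spectral_Radius"
begin

(* Directed graph: vertex type 'v, finite edge set E; an edge i->j is the pair (i,j).
   Vectors in [0,1]^E are represented as functions ('v \<times> 'v) \<Rightarrow> real,
   only their values on E are relevant. *)

(* Arcs of the non-backtracking (Hashimoto) structure: B_{i->j,k->l} = [j=k][i\<noteq>l] *)
definition hash_rel :: "('v \<times> 'v) set \<Rightarrow> (('v \<times> 'v) \<times> ('v \<times> 'v)) set" where
  "hash_rel E = {(e, e'). e \<in> E \<and> e' \<in> E \<and> snd e = fst e' \<and> fst e \<noteq> snd e'}"

(* B irreducible: the directed graph on E with arcs e -> e' whenever B_{e,e'} \<noteq> 0
   is strongly connected *)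
definition hashimoto_irreducible :: "('v \<times> 'v) set \<Rightarrow> bool" where
  "hashimoto_irreducible E \<longleftrightarrow> (\<forall>e\<in>E. \<forall>e'\<in>E. (e, e') \<in> (hash_rel E)\<^sup>*)"

definition edge_list :: "('v \<times> 'v) set \<Rightarrow> ('v \<times> 'v) list" where
  "edge_list E = (SOME es. distinct es \<and> set es = E)"

definition hashimoto :: "('v \<times> 'v) set \<Rightarrow> complex mat" where
  "hashimoto E = (let es = edge_list E in
     mat (length es) (length es)
       (\<lambda>(a, b). if (es ! a, es ! b) \<in> hash_rel E then 1 else 0))"

definition hashimoto_T_diag :: "('v \<times> 'v) set \<Rightarrow> ('v \<times> 'v \<Rightarrow> real) \<Rightarrow> complex mat" where
  "hashimoto_T_diag E p = (let es = edge_list E in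
     transpose_mat (hashimoto E) * mat_diag (length es) (\<lambda>i. complex_of_real (p (es ! i))))"

definition rho_BTp :: "('v \<times> 'v) set \<Rightarrow> ('v \<times> 'v \<Rightarrow> real) \<Rightarrow> real" where
  "rho_BTp E p = spectral_radius (hashimoto_T_diag E p)"

definition Fmap :: "('v \<times> 'v) set \<Rightarrow> ('v \<times> 'v \<Rightarrow> real) \<Rightarrow> ('v \<times> 'v \<Rightarrow> real) \<Rightarrow> ('v \<times> 'v \<Rightarrow> real)" where
  "Fmap E p y = (\<lambda>(j, i). \<Prod>k\<in>{k. (k, j) \<in> E \<and> k \<noteq> i}.
       1 - p (k, j) + p (k, j) * y (k, j))"

(* Q(p): smallest fixed point of F(.;p) in [0,1]^E, as the limit of the iterates of F from 0 *)
definition Qfix :: "('v \<times> 'v) set \<Rightarrow> ('v \<times> 'v \<Rightarrow> real) \<Rightarrow> ('v \<times> 'v \<Rightarrow> real)" where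
  "Qfix E p = (\<lambda>e. lim (\<lambda>n. ((Fmap E p) ^^ n) (\<lambda>_. 0) e))"

end

theory Submission
  imports Defs
begin

(*
  Write M(p) = B^T diag(p) = F'(1; p) and v = 1 - Q(p).  Expanding the product defining F gives
  M v - (M v)^2 <= v <= M v componentwise.  If lambda_n differs from lambda_c along the sequence,
  the defects 1 - Q(p(lambda_n)) are nonzero and tend to 0, so their normalisations are
  asymptotically fixed by M(p(lambda_n)), and a limit point is a nonnegative unit vector fixed by
  M(p(lambda_c)).  Otherwise Q(p(lambda_c)) differs from 1 and v = 1 - Q(p(lambda_c)) satisfies
  v <= M v.  Were this strict at some edge, then for small t > 0 the vector 1 - t v would be a
  supersolution of F which, by irreducibility, becomes strict on every edge after finitely many
  iterations; by continuity it would stay one near lambda_c and keep Q(p(lambda)) away from 1.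
  In both cases irreducibility makes the fixed vector positive, and a nonnegative matrix with a
  positive fixed vector has spectral radius 1.
*)

section \<open>Products of numbers in the unit interval\<close>

lemma prod_one_minus_bounds:
  fixes a :: "'a \<Rightarrow> real"
  assumes "finite S" "\<forall>i\<in>S. 0 \<le> a i \<and> a i \<le> 1"
  shows "1 - sum a S \<le> (\<Prod>i\<in>S. 1 - a i) \<and> (\<Prod>i\<in>S. 1 - a i) \<le> 1 - sum a S + (sum a S)\<^sup>2"
  using assms
proof (induction S rule: finite_induct)
  case empty
  then show ?case by simp
next
  case (insert x F)
  define P where "P = (\<Prod>i\<in>F. 1 - a i)"
  define s where "s = sum a F"
  have IH: "1 - s \<le> P" "P \<le> 1 - s + s\<^sup>2"
    using insert unfolding P_def s_def by auto
  have ax: "0 \<le> a x" "a x \<le> 1" and s0: "0 \<le> s"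
    using insert unfolding s_def by (auto intro: sum_nonneg)
  have "1 - (a x + s) \<le> (1 - a x) * (1 - s)"
    using ax s0 by (simp add: algebra_simps)
  also have "\<dots> \<le> (1 - a x) * P"
    using IH(1) ax by (intro mult_left_mono) auto
  finally have lower: "1 - (a x + s) \<le> (1 - a x) * P" .
  have "(1 - a x) * P \<le> (1 - s + s\<^sup>2) - a x * (1 - s)"
    using IH mult_left_mono[OF IH(1) ax(1)] by (simp add: algebra_simps)
  also have "\<dots> \<le> 1 - (a x + s) + (a x + s)\<^sup>2"
    using ax s0 by (simp add: power2_eq_square algebra_simps)
  finally show ?case
    using lower insert(1,2) unfolding P_def s_def by simp
qed

lemma prod_one_minus_scaled_le:
  fixes a :: "'a \<Rightarrow> real"
  assumes "finite S" "\<forall>i\<in>S. 0 \<le> a i \<and> a i \<le> 1" "0 \<le> t" "t \<le> 1"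
  shows "(\<Prod>i\<in>S. 1 - t * a i) \<le> 1 - t + t * (\<Prod>i\<in>S. 1 - a i)"
  using assms
proof (induction S rule: finite_induct)
  case empty
  then show ?case by simp
next
  case (insert x F)
  define c where "c = (\<Prod>i\<in>F. 1 - a i)"
  have ax: "0 \<le> a x" "a x \<le> 1" and c: "0 \<le> c" "c \<le> 1"
    using insert unfolding c_def by (auto intro: prod_nonneg prod_le_1)
  have "(\<Prod>i\<in>insert x F. 1 - t * a i) = (1 - t * a x) * (\<Prod>i\<in>F. 1 - t * a i)"
    using insert by simp
  also have "\<dots> \<le> (1 - t * a x) * (1 - t + t * c)"
    using insert ax unfolding c_def by (intro mult_left_mono) (auto simp: mult_le_one)
  also have "\<dots> \<le> 1 - t + t * ((1 - a x) * c)"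
  proof -
    have "0 \<le> a x * t * (1 - t) * (1 - c)"
      using ax c insert.prems by auto
    then show ?thesis by (simp add: algebra_simps)
  qed
  also have "(1 - a x) * c = (\<Prod>i\<in>insert x F. 1 - a i)"
    using insert unfolding c_def by simp
  finally show ?case .
qed

lemma prod_le_member:
  fixes f :: "'a \<Rightarrow> real"
  assumes "finite S" "\<forall>i\<in>S. 0 \<le> f i \<and> f i \<le> 1" "j \<in> S"
  shows "prod f S \<le> f j"
proof -
  have "prod f S = f j * prod f (S - {j})"
    using assms by (simp add: prod.remove)
  moreover have "prod f (S - {j}) \<le> 1"
    using assms by (intro prod_le_1) auto
  ultimately show ?thesis
    using assms by (simp add: mult_left_le)
qed

lemma prod_less_prod_of_less_member:
  fixes f g :: "'a \<Rightarrow> real"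
  assumes "finite S" "\<forall>i\<in>S. 0 \<le> f i \<and> f i \<le> g i" "\<forall>i\<in>S. 0 < g i"
    and "j \<in> S" "f j < g j"
  shows "prod f S < prod g S"
proof -
  have "prod f S = f j * prod f (S - {j})" "prod g S = g j * prod g (S - {j})"
    using assms by (simp_all add: prod.remove)
  moreover have "prod f (S - {j}) \<le> prod g (S - {j})"
    using assms by (intro prod_mono) auto
  moreover have "0 < prod g (S - {j})"
    using assms by (intro prod_pos) auto
  moreover have "0 \<le> f j"
    using assms by auto
  ultimately show ?thesis
    using assms(5) by (metis mult_left_mono mult_strict_right_mono order_le_less_trans)
qed

section \<open>Nonnegative matrices with a positive fixed vector\<close>

lemma norm_eigenvalue_le_1_of_pos_subinvariant:
  fixes m :: "nat \<Rightarrow> nat \<Rightarrow> real" and w :: "nat \<Rightarrow> real"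
  assumes m_nonneg: "\<And>a b. a < n \<Longrightarrow> b < n \<Longrightarrow> 0 \<le> m a b"
    and w_pos: "\<And>b. b < n \<Longrightarrow> 0 < w b"
    and sub: "\<And>a. a < n \<Longrightarrow> (\<Sum>b<n. m a b * w b) \<le> w a"
    and mu: "mu \<in> spectrum (mat n n (\<lambda>(a, b). complex_of_real (m a b)))"
  shows "norm mu \<le> 1"
proof -
  define A where "A = mat n n (\<lambda>(a, b). complex_of_real (m a b))"
  obtain X where X: "X \<in> carrier_vec n" "X \<noteq> 0\<^sub>v n" "A *\<^sub>v X = mu \<cdot>\<^sub>v X"
    using mu unfolding spectrum_def eigenvalue_def eigenvector_def A_def by auto
  have AX: "(A *\<^sub>v X) $ a = (\<Sum>b<n. complex_of_real (m a b) * X $ b)" if "a < n" for a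
    using X(1) that unfolding A_def by (auto simp: scalar_prod_def lessThan_atLeast0)
  text \<open>Compare \<open>X\<close> with \<open>w\<close> at an index where \<open>|X\<^sub>b| / w\<^sub>b\<close> is maximal.\<close>
  define f where "f b = norm (X $ b) / w b" for b
  have "n \<noteq> 0"
    using X(1,2) by auto
  then obtain a0 where a0: "a0 < n" "f a0 = Max (f ` {..<n})"
    using Max_in[of "f ` {..<n}"] by fastforce
  define c where "c = f a0"
  have X_le: "norm (X $ b) \<le> c * w b" if "b < n" for b
  proof -
    have "f b \<le> c"
      using Max_ge[of "f ` {..<n}" "f b"] that unfolding c_def a0(2) by simp
    then show ?thesis
      using w_pos[OF that] unfolding f_def by (simp add: pos_divide_le_eq)
  qed
  have X_a0: "norm (X $ a0) = c * w a0"
    using w_pos[OF a0(1)] unfolding c_def f_def by simp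
  have "X $ a0 \<noteq> 0"
  proof
    assume "X $ a0 = 0"
    then have "c = 0"
      using X_a0 w_pos[OF a0(1)] by simp
    then have "X = 0\<^sub>v n"
      using X(1) X_le by (intro eq_vecI) force+
    with X(2) show False ..
  qed
  have "norm mu * norm (X $ a0) = norm ((A *\<^sub>v X) $ a0)"
    using X(1,3) a0(1) by (simp add: norm_mult)
  also have "\<dots> \<le> (\<Sum>b<n. norm (complex_of_real (m a0 b) * X $ b))"
    unfolding AX[OF a0(1)] by (rule norm_sum)
  also have "\<dots> \<le> (\<Sum>b<n. m a0 b * (c * w b))"
    using m_nonneg a0(1) X_le by (intro sum_mono) (simp add: norm_mult mult_left_mono)
  also have "\<dots> = c * (\<Sum>b<n. m a0 b * w b)"
    by (simp add: sum_distrib_left algebra_simps)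
  also have "\<dots> \<le> c * w a0"
    using sub[OF a0(1)] X_a0 w_pos[OF a0(1)]
    by (intro mult_left_mono) (auto simp: zero_le_divide_iff c_def f_def)
  finally have "norm mu * (c * w a0) \<le> 1 * (c * w a0)"
    using X_a0 by simp
  moreover have "0 < c * w a0"
    using X_a0 \<open>X $ a0 \<noteq> 0\<close> by (metis zero_less_norm_iff)
  ultimately show "norm mu \<le> 1"
    by (rule mult_right_le_imp_le)
qed

lemma spectral_radius_eq_1_of_pos_fixed_vector:
  fixes m :: "nat \<Rightarrow> nat \<Rightarrow> real" and w :: "nat \<Rightarrow> real"
  assumes n: "0 < n"
    and m_nonneg: "\<And>a b. a < n \<Longrightarrow> b < n \<Longrightarrow> 0 \<le> m a b"
    and w_pos: "\<And>b. b < n \<Longrightarrow> 0 < w b"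
    and fixed: "\<And>a. a < n \<Longrightarrow> (\<Sum>b<n. m a b * w b) = w a"
  shows "spectral_radius (mat n n (\<lambda>(a, b). complex_of_real (m a b))) = 1"
proof -
  define A where "A = mat n n (\<lambda>(a, b). complex_of_real (m a b))"
  have A: "A \<in> carrier_mat n n"
    unfolding A_def by simp
  define W where "W = vec n (\<lambda>b. complex_of_real (w b))"
  have "W \<noteq> 0\<^sub>v n"
    using w_pos[OF n] n unfolding W_def
    by (metis index_vec index_zero_vec(1) of_real_eq_0_iff less_irrefl)
  moreover have "A *\<^sub>v W = 1 \<cdot>\<^sub>v W"
    using fixed unfolding A_def W_def
    by (intro eq_vecI)
       (auto simp: scalar_prod_def lessThan_atLeast0 simp flip: of_real_mult of_real_sum)
  ultimately have "1 \<in> spectrum A"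
    unfolding spectrum_def eigenvalue_def eigenvector_def using A
    by (auto intro!: exI[of _ W] simp: W_def)
  then have "1 \<le> spectral_radius A"
    using spectral_radius_mem_max(2)[OF A n] by force
  moreover obtain mu where "mu \<in> spectrum A" "spectral_radius A = norm mu"
    using spectral_radius_mem_max(1)[OF A n] by auto
  moreover have "norm mu \<le> 1" if "mu \<in> spectrum A" for mu
    using norm_eigenvalue_le_1_of_pos_subinvariant[OF m_nonneg w_pos _ that[unfolded A_def]]
      fixed by auto
  ultimately show ?thesis
    unfolding A_def by fastforce
qed

section \<open>Non-backtracking predecessors\<close>

definition nb_preds :: "('v \<times> 'v) set \<Rightarrow> 'v \<times> 'v \<Rightarrow> ('v \<times> 'v) set" where
  "nb_preds E e' = {e \<in> E. snd e = fst e' \<and> fst e \<noteq> snd e'}"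

text \<open>The component \<open>e'\<close> of \<open>B\<^sup>T diag(p) w\<close>, the linearisation of \<open>F\<close> at \<open>1\<close>.\<close>
definition nb_transfer ::
    "('v \<times> 'v) set \<Rightarrow> ('v \<times> 'v \<Rightarrow> real) \<Rightarrow> ('v \<times> 'v \<Rightarrow> real) \<Rightarrow> 'v \<times> 'v \<Rightarrow> real" where
  "nb_transfer E p w e' = (\<Sum>e\<in>nb_preds E e'. p e * w e)"

definition in_unit_box :: "'a set \<Rightarrow> ('a \<Rightarrow> real) \<Rightarrow> bool" where
  "in_unit_box E y \<longleftrightarrow> (\<forall>e\<in>E. 0 \<le> y e \<and> y e \<le> 1)"

lemma nb_preds_subset: "nb_preds E e' \<subseteq> E"
  unfolding nb_preds_def by auto

lemma in_nb_predsD: "e \<in> nb_preds E e' \<Longrightarrow> e \<in> E"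
  unfolding nb_preds_def by simp

lemma finite_nb_preds: "finite E \<Longrightarrow> finite (nb_preds E e')"
  using nb_preds_subset finite_subset by metis

lemma hash_rel_iff_nb_preds: "e' \<in> E \<Longrightarrow> (e, e') \<in> hash_rel E \<longleftrightarrow> e \<in> nb_preds E e'"
  unfolding nb_preds_def hash_rel_def by auto

lemma hashimoto_irreducible_propagate:
  assumes irr: "hashimoto_irreducible E" and e0: "e0 \<in> E" "P e0"
    and propagate: "\<And>e e'. e' \<in> E \<Longrightarrow> e \<in> nb_preds E e' \<Longrightarrow> P e \<Longrightarrow> P e'"
    and e: "e \<in> E"
  shows "P e"
proof -
  have "(e0, e) \<in> (hash_rel E)\<^sup>*"
    using irr e0(1) e unfolding hashimoto_irreducible_def by blast
  then show ?thesis
  proof (induction rule: rtrancl_induct)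
    case base
    show ?case by fact
  next
    case (step e e')
    then have "e' \<in> E" by (simp add: hash_rel_def)
    with step show ?case
      using propagate hash_rel_iff_nb_preds by blast
  qed
qed

lemma nb_transfer_scale: "nb_transfer E p (\<lambda>e. c * w e) e' = c * nb_transfer E p w e'"
  unfolding nb_transfer_def by (simp add: sum_distrib_left algebra_simps)

lemma nb_transfer_bounds:
  assumes fin: "finite E" and p: "in_unit_box E p" and w: "\<forall>e\<in>E. 0 \<le> w e"
  shows "0 \<le> nb_transfer E p w e'" "nb_transfer E p w e' \<le> (\<Sum>e\<in>E. w e)"
proof -
  have "0 \<le> p e * w e \<and> p e * w e \<le> w e" if "e \<in> E" for e
    using that p w unfolding in_unit_box_def by (simp add: mult_left_le_one_le)
  then show "0 \<le> nb_transfer E p w e'"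
    unfolding nb_transfer_def by (meson in_nb_predsD sum_nonneg)
  have "nb_transfer E p w e' \<le> (\<Sum>e\<in>nb_preds E e'. w e)"
    unfolding nb_transfer_def using \<open>\<And>e. e \<in> E \<Longrightarrow> _\<close>
    by (meson in_nb_predsD sum_mono)
  also have "\<dots> \<le> (\<Sum>e\<in>E. w e)"
    using fin w nb_preds_subset by (intro sum_mono2) (auto dest: in_nb_predsD)
  finally show "nb_transfer E p w e' \<le> (\<Sum>e\<in>E. w e)" .
qed

lemma nb_transfer_fixed_vector_pos:
  assumes fin: "finite E" and irr: "hashimoto_irreducible E" and p: "\<forall>e\<in>E. 0 < p e"
    and W_nonneg: "\<forall>e\<in>E. 0 \<le> W e" and fixed: "\<forall>e\<in>E. nb_transfer E p W e = W e"
    and W_ne_0: "\<exists>e\<in>E. W e \<noteq> 0" and e: "e \<in> E"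
  shows "0 < W e"
proof -
  obtain e0 where e0: "e0 \<in> E" "0 < W e0"
    using W_ne_0 W_nonneg by force
  show ?thesis
  proof (rule hashimoto_irreducible_propagate[OF irr e0(1), where P = "\<lambda>e. 0 < W e"])
    fix e e'
    assume e': "e' \<in> E" and pred: "e \<in> nb_preds E e'" and pos: "0 < W e"
    have "\<forall>i\<in>E. 0 \<le> p i * W i"
      using p W_nonneg by (simp add: less_imp_le)
    then have "p e * W e \<le> nb_transfer E p W e'"
      unfolding nb_transfer_def
      by (intro member_le_sum[OF pred _ finite_nb_preds[OF fin]]) (blast dest: in_nb_predsD)
    moreover have "0 < p e * W e"
      using p in_nb_predsD[OF pred] pos by simp
    ultimately show "0 < W e'"
      using fixed e' by simp
  qed (use e0 e in simp_all)
qed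

lemma edge_list_distinct_set:
  assumes "finite E"
  shows "distinct (edge_list E)" "set (edge_list E) = E"
proof -
  have "\<exists>es. distinct es \<and> set es = E"
    using finite_distinct_list[OF assms] by blast
  from someI_ex[OF this] show "distinct (edge_list E)" "set (edge_list E) = E"
    unfolding edge_list_def by simp_all
qed

lemma rho_BTp_eq_1_of_pos_eigenvector:
  assumes fin: "finite E" and ne: "E \<noteq> {}" and p_nonneg: "\<forall>e\<in>E. 0 \<le> p e"
    and w_pos: "\<forall>e\<in>E. 0 < w e" and eigen: "\<forall>e\<in>E. nb_transfer E p w e = w e"
  shows "rho_BTp E p = 1"
proof -
  define es where "es = edge_list E"
  define n where "n = length es"
  have es: "distinct es" "set es = E"
    using edge_list_distinct_set[OF fin] unfolding es_def by auto
  have es_E: "es ! a \<in> E" if "a < n" for a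
    using es(2) that unfolding n_def by auto
  define m where "m a b = (if (es ! b, es ! a) \<in> hash_rel E then p (es ! b) else 0)" for a b
  have BTp: "hashimoto_T_diag E p = mat n n (\<lambda>(a, b). complex_of_real (m a b))"
  proof -
    have "transpose_mat (hashimoto E) \<in> carrier_mat n n"
      unfolding hashimoto_def Let_def es_def[symmetric] n_def by simp
    then show ?thesis
      unfolding hashimoto_T_diag_def Let_def es_def[symmetric] n_def[symmetric]
      by (subst mat_diag_mult_right)
         (auto intro!: eq_matI simp: m_def hashimoto_def Let_def es_def[symmetric] n_def[symmetric])
  qed
  have row: "(\<Sum>b<n. m a b * w (es ! b)) = nb_transfer E p w (es ! a)" if a: "a < n" for a
  proof -
    define g where "g e = (if (e, es ! a) \<in> hash_rel E then p e * w e else 0)" for e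
    have "(\<Sum>b<n. m a b * w (es ! b)) = (\<Sum>b<n. g (es ! b))"
      unfolding m_def g_def by (intro sum.cong) auto
    also have "\<dots> = sum g E"
      using sum.reindex_bij_betw[OF bij_betw_nth[OF es(1) _ es(2)[symmetric]], where g = g]
      unfolding n_def by simp
    also have "\<dots> = (\<Sum>e\<in>{e\<in>E. (e, es ! a) \<in> hash_rel E}. p e * w e)"
      unfolding g_def using fin by (simp add: sum.inter_filter)
    also have "{e\<in>E. (e, es ! a) \<in> hash_rel E} = nb_preds E (es ! a)"
      using hash_rel_iff_nb_preds[OF es_E[OF a]] nb_preds_subset by blast
    finally show ?thesis
      unfolding nb_transfer_def .
  qed
  have "0 < n"
    using ne es(2) unfolding n_def by auto
  then show ?thesis
    unfolding rho_BTp_def BTp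
    by (rule spectral_radius_eq_1_of_pos_fixed_vector[where w = "\<lambda>b. w (es ! b)"])
       (use es_E p_nonneg w_pos eigen row in \<open>auto simp: m_def\<close>)
qed

section \<open>The map \<open>F\<close> and its least fixed point\<close>

lemma Fmap_eq_prod_nb_preds: "Fmap E p y e' = (\<Prod>e\<in>nb_preds E e'. 1 - p e + p e * y e)"
proof -
  obtain j i where e': "e' = (j, i)" by (cases e')
  have "nb_preds E e' = (\<lambda>k. (k, j)) ` {k. (k, j) \<in> E \<and> k \<noteq> i}"
    unfolding nb_preds_def e' by force
  moreover have "inj_on (\<lambda>k. (k, j)) {k. (k, j) \<in> E \<and> k \<noteq> i}"
    by (auto simp: inj_on_def)
  ultimately show ?thesis
    unfolding Fmap_def e' by (simp add: prod.reindex)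
qed

lemma Fmap_one_minus: "Fmap E p (\<lambda>e. 1 - u e) e' = (\<Prod>e\<in>nb_preds E e'. 1 - p e * u e)"
  unfolding Fmap_eq_prod_nb_preds by (simp add: algebra_simps)

lemma Fmap_one: "Fmap E p (\<lambda>_. 1) = (\<lambda>_. 1)"
  unfolding Fmap_eq_prod_nb_preds by simp

lemma Fmap_mono:
  assumes p: "in_unit_box E p" and yz: "\<forall>e\<in>E. 0 \<le> y e \<and> y e \<le> z e"
  shows "0 \<le> Fmap E p y e'" "Fmap E p y e' \<le> Fmap E p z e'"
proof -
  have "0 \<le> 1 - p e + p e * y e \<and> 1 - p e + p e * y e \<le> 1 - p e + p e * z e"
    if "e \<in> nb_preds E e'" for e
  proof -
    have "0 \<le> p e" "p e \<le> 1" "0 \<le> y e" "y e \<le> z e"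
      using that nb_preds_subset p yz unfolding in_unit_box_def by blast+
    then show ?thesis
      by (smt (verit) mult_left_mono mult_nonneg_nonneg)
  qed
  then show "0 \<le> Fmap E p y e'" "Fmap E p y e' \<le> Fmap E p z e'"
    unfolding Fmap_eq_prod_nb_preds by (auto intro: prod_nonneg prod_mono)
qed

lemma funpow_Fmap_mono:
  assumes p: "in_unit_box E p" and yz: "\<forall>e\<in>E. 0 \<le> y e \<and> y e \<le> z e"
  shows "\<forall>e\<in>E. 0 \<le> (Fmap E p ^^ m) y e \<and> (Fmap E p ^^ m) y e \<le> (Fmap E p ^^ m) z e"
proof (induction m)
  case 0
  show ?case using yz by simp
next
  case (Suc m)
  show ?case
    using Fmap_mono[OF p Suc] by simp
qed

lemma funpow_Fmap_antimono:
  assumes p: "in_unit_box E p" and x_nonneg: "\<forall>e\<in>E. 0 \<le> x e"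
    and super: "\<forall>e\<in>E. Fmap E p x e \<le> x e" and "m \<le> m'" and e: "e \<in> E"
  shows "0 \<le> (Fmap E p ^^ m') x e" "(Fmap E p ^^ m') x e \<le> (Fmap E p ^^ m) x e"
proof -
  have "\<forall>e\<in>E. 0 \<le> x e \<and> x e \<le> x e"
    using x_nonneg by simp
  then have "\<forall>e\<in>E. 0 \<le> Fmap E p x e \<and> Fmap E p x e \<le> x e"
    using super Fmap_mono(1)[OF p, of x x] by simp
  from funpow_Fmap_mono[OF p this]
  have "(Fmap E p ^^ Suc k) x e \<le> (Fmap E p ^^ k) x e" for k
    using e by (simp add: funpow_Suc_right del: funpow.simps)
  then show "(Fmap E p ^^ m') x e \<le> (Fmap E p ^^ m) x e"
    using lift_Suc_antimono_le[of "\<lambda>k. (Fmap E p ^^ k) x e"] \<open>m \<le> m'\<close> by blast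
  show "0 \<le> (Fmap E p ^^ m') x e"
    using funpow_Fmap_mono[OF p, of x x m'] x_nonneg e by simp
qed

lemma funpow_Fmap_zero_bounds:
  assumes p: "in_unit_box E p"
  shows "0 \<le> (Fmap E p ^^ n) (\<lambda>_. 0) e \<and> (Fmap E p ^^ n) (\<lambda>_. 0) e \<le> 1"
proof (cases n)
  case 0
  then show ?thesis by simp
next
  case (Suc m)
  have "(Fmap E p ^^ m) (\<lambda>_. 1) = (\<lambda>_. 1)"
    by (induction m) (simp_all add: Fmap_one)
  then have "\<forall>e\<in>E. 0 \<le> (Fmap E p ^^ m) (\<lambda>_. 0) e \<and> (Fmap E p ^^ m) (\<lambda>_. 0) e \<le> 1"
    using funpow_Fmap_mono[OF p, where y = "\<lambda>_. 0" and z = "\<lambda>_. 1" and m = m] by simp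
  then show ?thesis
    using Suc Fmap_mono[OF p, where z = "\<lambda>_. 1"] by (simp add: Fmap_one)
qed

lemma funpow_Fmap_zero_le_Suc:
  assumes p: "in_unit_box E p"
  shows "(Fmap E p ^^ n) (\<lambda>_. 0) e \<le> (Fmap E p ^^ Suc n) (\<lambda>_. 0) e"
proof (cases n)
  case 0
  then show ?thesis
    using Fmap_mono(1)[OF p, where y = "\<lambda>_. 0" and z = "\<lambda>_. 0"] by simp
next
  case (Suc m)
  have "\<forall>e\<in>E. 0 \<le> (\<lambda>_. 0::real) e \<and> (\<lambda>_. 0) e \<le> Fmap E p (\<lambda>_. 0) e"
    using Fmap_mono(1)[OF p, where y = "\<lambda>_. 0" and z = "\<lambda>_. 0"] by simp
  from funpow_Fmap_mono[OF p this, of m]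
  have "\<forall>e\<in>E. 0 \<le> (Fmap E p ^^ m) (\<lambda>_. 0) e
      \<and> (Fmap E p ^^ m) (\<lambda>_. 0) e \<le> (Fmap E p ^^ Suc m) (\<lambda>_. 0) e"
    by (simp add: funpow_Suc_right del: funpow.simps)
  then show ?thesis
    using Suc Fmap_mono(2)[OF p] by simp
qed

lemma Fmap_one_minus_bounds:
  assumes fin: "finite E" and p: "in_unit_box E p" and v: "in_unit_box E v"
  shows "1 - nb_transfer E p v e' \<le> Fmap E p (\<lambda>e. 1 - v e) e'"
    and "Fmap E p (\<lambda>e. 1 - v e) e' \<le> 1 - nb_transfer E p v e' + (nb_transfer E p v e')\<^sup>2"
proof -
  have "\<forall>e\<in>nb_preds E e'. 0 \<le> p e * v e \<and> p e * v e \<le> 1"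
    using p v unfolding in_unit_box_def by (auto dest: in_nb_predsD simp: mult_le_one)
  from prod_one_minus_bounds[OF finite_nb_preds[OF fin] this]
  show "1 - nb_transfer E p v e' \<le> Fmap E p (\<lambda>e. 1 - v e) e'"
    and "Fmap E p (\<lambda>e. 1 - v e) e' \<le> 1 - nb_transfer E p v e' + (nb_transfer E p v e')\<^sup>2"
    unfolding Fmap_one_minus nb_transfer_def by simp_all
qed

lemma Fmap_one_minus_scaled_le:
  assumes fin: "finite E" and p: "in_unit_box E p" and v: "in_unit_box E v"
    and t: "0 \<le> t" "t \<le> 1"
  shows "Fmap E p (\<lambda>e. 1 - t * v e) e' \<le> 1 - t + t * Fmap E p (\<lambda>e. 1 - v e) e'"
proof -
  have "\<forall>e\<in>nb_preds E e'. 0 \<le> p e * v e \<and> p e * v e \<le> 1"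
    using p v unfolding in_unit_box_def by (auto dest: in_nb_predsD simp: mult_le_one)
  from prod_one_minus_scaled_le[OF finite_nb_preds[OF fin] this t]
  show ?thesis
    unfolding Fmap_one_minus by (simp add: mult.left_commute)
qed

lemma Fmap_less_of_less_pred:
  assumes fin: "finite E" and p: "\<forall>e\<in>E. 0 < p e \<and> p e \<le> 1"
    and y: "\<forall>e\<in>E. 0 \<le> y e \<and> y e \<le> x e" and x_pos: "\<forall>e\<in>E. 0 < x e"
    and pred: "e \<in> nb_preds E e'" and less: "y e < x e"
  shows "Fmap E p y e' < Fmap E p x e'"
  unfolding Fmap_eq_prod_nb_preds
proof (rule prod_less_prod_of_less_member[OF finite_nb_preds[OF fin] _ _ pred])
  have factor: "0 \<le> 1 - p i + p i * y i \<and> 1 - p i + p i * y i \<le> 1 - p i + p i * x i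
      \<and> 0 < 1 - p i + p i * x i" if "i \<in> E" for i
  proof -
    have "0 < p i" "p i \<le> 1" "0 \<le> y i" "y i \<le> x i" "0 < x i"
      using that p y x_pos by auto
    then show ?thesis
      by (smt (verit) mult_left_mono mult_pos_pos mult_nonneg_nonneg)
  qed
  show "\<forall>i\<in>nb_preds E e'. 0 \<le> 1 - p i + p i * y i \<and> 1 - p i + p i * y i \<le> 1 - p i + p i * x i"
    using factor by (auto dest: in_nb_predsD)
  show "\<forall>i\<in>nb_preds E e'. 0 < 1 - p i + p i * x i"
    using factor by (auto dest: in_nb_predsD)
  show "1 - p e + p e * y e < 1 - p e + p e * x e"
    using p in_nb_predsD[OF pred] less by simp
qed

lemma Qfix_LIMSEQ:
  assumes p: "in_unit_box E p"
  shows "(\<lambda>n. (Fmap E p ^^ n) (\<lambda>_. 0) e) \<longlonglongrightarrow> Qfix E p e"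
proof -
  have "incseq (\<lambda>n. (Fmap E p ^^ n) (\<lambda>_. 0) e)"
    using funpow_Fmap_zero_le_Suc[OF p] by (simp add: incseq_Suc_iff)
  moreover have "\<forall>n. (Fmap E p ^^ n) (\<lambda>_. 0) e \<le> 1"
    using funpow_Fmap_zero_bounds[OF p] by blast
  ultimately obtain L where "(\<lambda>n. (Fmap E p ^^ n) (\<lambda>_. 0) e) \<longlonglongrightarrow> L"
    by (rule incseq_convergent)
  then show ?thesis
    unfolding Qfix_def by (simp add: limI)
qed

lemma Qfix_bounds:
  assumes p: "in_unit_box E p"
  shows "0 \<le> Qfix E p e" "Qfix E p e \<le> 1"
  using Qfix_LIMSEQ[OF p, of e] funpow_Fmap_zero_bounds[OF p]
  by (meson LIMSEQ_le_const LIMSEQ_le_const2)+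

lemma Fmap_Qfix:
  assumes p: "in_unit_box E p"
  shows "Fmap E p (Qfix E p) = Qfix E p"
proof
  fix e'
  define y where "y n = (Fmap E p ^^ n) (\<lambda>_. 0)" for n
  have "(\<lambda>n. y n e) \<longlonglongrightarrow> Qfix E p e" for e
    unfolding y_def by (rule Qfix_LIMSEQ[OF p])
  then have "(\<lambda>n. Fmap E p (y n) e') \<longlonglongrightarrow> Fmap E p (Qfix E p) e'"
    unfolding Fmap_eq_prod_nb_preds by (intro tendsto_intros)
  moreover have "(\<lambda>n. Fmap E p (y n) e') \<longlonglongrightarrow> Qfix E p e'"
    using LIMSEQ_Suc[OF Qfix_LIMSEQ[OF p, of e']] unfolding y_def by simp
  ultimately show "Fmap E p (Qfix E p) e' = Qfix E p e'"
    by (rule LIMSEQ_unique)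
qed

lemma Qfix_eq_prod:
  assumes p: "in_unit_box E p"
  shows "Qfix E p e' = (\<Prod>e\<in>nb_preds E e'. 1 - p e * (1 - Qfix E p e))"
  using Fmap_one_minus[of E p "\<lambda>e. 1 - Qfix E p e" e'] Fmap_Qfix[OF p] by simp

lemma one_minus_Qfix_bounds:
  assumes fin: "finite E" and p: "in_unit_box E p"
  shows "nb_transfer E p (\<lambda>e. 1 - Qfix E p e) e' - (nb_transfer E p (\<lambda>e. 1 - Qfix E p e) e')\<^sup>2
      \<le> 1 - Qfix E p e'"
    and "1 - Qfix E p e' \<le> nb_transfer E p (\<lambda>e. 1 - Qfix E p e) e'"
proof -
  have "in_unit_box E (\<lambda>e. 1 - Qfix E p e)"
    using Qfix_bounds[OF p] unfolding in_unit_box_def by simp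
  from Fmap_one_minus_bounds[OF fin p this, of e']
  show "nb_transfer E p (\<lambda>e. 1 - Qfix E p e) e' - (nb_transfer E p (\<lambda>e. 1 - Qfix E p e) e')\<^sup>2
      \<le> 1 - Qfix E p e'"
    and "1 - Qfix E p e' \<le> nb_transfer E p (\<lambda>e. 1 - Qfix E p e) e'"
    using Fmap_Qfix[OF p] by simp_all
qed

lemma one_minus_Qfix_pos:
  assumes fin: "finite E" and irr: "hashimoto_irreducible E"
    and p: "\<forall>e\<in>E. 0 < p e \<and> p e \<le> 1" and e1: "e1 \<in> E" "Qfix E p e1 \<noteq> 1"
    and e: "e \<in> E"
  shows "0 < 1 - Qfix E p e"
proof -
  have box: "in_unit_box E p"
    using p unfolding in_unit_box_def by auto
  show ?thesis
  proof (rule hashimoto_irreducible_propagate[OF irr e1(1) _ _ e])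
    show "0 < 1 - Qfix E p e1"
      using Qfix_bounds(2)[OF box, of e1] e1(2) by simp
  next
    fix e e'
    assume pred: "e \<in> nb_preds E e'" and pos: "0 < 1 - Qfix E p e"
    have factors:
      "\<forall>i\<in>nb_preds E e'. 0 \<le> 1 - p i * (1 - Qfix E p i) \<and> 1 - p i * (1 - Qfix E p i) \<le> 1"
    proof
      fix i
      assume "i \<in> nb_preds E e'"
      then have "i \<in> E"
        by (rule in_nb_predsD)
      then have "0 < p i" "p i \<le> 1" "0 \<le> 1 - Qfix E p i" "1 - Qfix E p i \<le> 1"
        using p Qfix_bounds[OF box, of i] by auto
      then show "0 \<le> 1 - p i * (1 - Qfix E p i) \<and> 1 - p i * (1 - Qfix E p i) \<le> 1"
        by (simp add: mult_le_one)
    qed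
    have "Qfix E p e' \<le> 1 - p e * (1 - Qfix E p e)"
      using prod_le_member[OF finite_nb_preds[OF fin] factors pred] Qfix_eq_prod[OF box, of e']
      by simp
    moreover have "0 < p e * (1 - Qfix E p e)"
      using p in_nb_predsD[OF pred] pos by simp
    ultimately show "0 < 1 - Qfix E p e'"
      by linarith
  qed
qed

lemma Qfix_le_of_supersolution:
  assumes p: "in_unit_box E p" and N: "0 < N"
    and x_nonneg: "\<forall>e\<in>E. 0 \<le> x e" and super: "\<forall>e\<in>E. (Fmap E p ^^ N) x e \<le> x e"
    and e: "e \<in> E"
  shows "Qfix E p e \<le> x e"
proof -
  have below: "\<forall>e\<in>E. (Fmap E p ^^ (N * k)) (\<lambda>_. 0) e \<le> x e" for k
  proof (induction k)
    case 0
    show ?case using x_nonneg by simp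
  next
    case (Suc k)
    then have "\<forall>e\<in>E. 0 \<le> (Fmap E p ^^ (N * k)) (\<lambda>_. 0) e \<and> (Fmap E p ^^ (N * k)) (\<lambda>_. 0) e \<le> x e"
      using funpow_Fmap_zero_bounds[OF p] by blast
    from funpow_Fmap_mono[OF p this, of N]
    have "\<forall>e\<in>E. (Fmap E p ^^ (N + N * k)) (\<lambda>_. 0) e \<le> (Fmap E p ^^ N) x e"
      by (simp add: funpow_add)
    then show ?case
      using super by fastforce
  qed
  have "strict_mono (\<lambda>k. N * k)"
    using N by (simp add: strict_mono_def)
  from LIMSEQ_subseq_LIMSEQ[OF Qfix_LIMSEQ[OF p, of e] this]
  have "(\<lambda>k. (Fmap E p ^^ (N * k)) (\<lambda>_. 0) e) \<longlonglongrightarrow> Qfix E p e"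
    by (simp add: o_def)
  then show ?thesis
    using below e by (meson LIMSEQ_le_const2)
qed

lemma tendsto_funpow_Fmap:
  fixes p :: "'b \<Rightarrow> 'v \<times> 'v \<Rightarrow> real"
  assumes p_lim: "\<forall>e\<in>E. ((\<lambda>l. p l e) \<longlongrightarrow> p0 e) F"
  shows "((\<lambda>l. (Fmap E (p l) ^^ m) x e') \<longlongrightarrow> (Fmap E p0 ^^ m) x e') F"
proof (induction m arbitrary: e')
  case 0
  show ?case by simp
next
  case (Suc m)
  define y where "y l = (Fmap E (p l) ^^ m) x" for l
  define y0 where "y0 = (Fmap E p0 ^^ m) x"
  have "((\<lambda>l. y l e) \<longlongrightarrow> y0 e) F" for e
    unfolding y_def y0_def by (rule Suc)
  moreover have "((\<lambda>l. p l e) \<longlongrightarrow> p0 e) F" if "e \<in> nb_preds E e'" for e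
    using p_lim nb_preds_subset that by blast
  ultimately have "((\<lambda>l. Fmap E (p l) (y l) e') \<longlongrightarrow> Fmap E p0 y0 e') F"
    unfolding Fmap_eq_prod_nb_preds by (intro tendsto_intros) auto
  then show ?case
    unfolding y_def y0_def by simp
qed

section \<open>Limits of normalised defects\<close>

lemma finite_family_convergent_subseq:
  fixes f :: "nat \<Rightarrow> 'a \<Rightarrow> real"
  assumes "finite S" and "\<And>n e. e \<in> S \<Longrightarrow> \<bar>f n e\<bar> \<le> B"
  shows "\<exists>r. strict_mono r \<and> (\<forall>e\<in>S. convergent (\<lambda>n. f (r n) e))"
  using assms
proof (induction S rule: finite_induct)
  case empty
  show ?case using strict_mono_id by blast
next
  case (insert x S)
  then obtain r where r: "strict_mono r" "\<forall>e\<in>S. convergent (\<lambda>n. f (r n) e)"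
    by blast
  obtain r' where r': "strict_mono r'" "monoseq (\<lambda>n. f (r (r' n)) x)"
    using seq_monosub[of "\<lambda>n. f (r n) x"] by (auto simp: o_def)
  have "Bseq (\<lambda>n. f (r (r' n)) x)"
    using insert.prems by (intro BseqI'[of _ B]) auto
  with r'(2) have "convergent (\<lambda>n. f (r (r' n)) x)"
    using Bseq_monoseq_convergent by blast
  moreover have "\<forall>e\<in>S. convergent (\<lambda>n. f (r (r' n)) e)"
    using r(2) convergent_subseq_convergent[OF _ r'(1)] by (auto simp: o_def)
  moreover have "strict_mono (\<lambda>n. r (r' n))"
    using strict_mono_o[OF r(1) r'(1)] by (simp add: o_def)
  ultimately show ?case
    by (intro exI[of _ "\<lambda>n. r (r' n)"]) auto
qed

lemma fixed_vector_of_asymptotic_fixed_vectors: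
  fixes p w :: "nat \<Rightarrow> 'v \<times> 'v \<Rightarrow> real"
  assumes fin: "finite E"
    and w_box: "\<And>n. in_unit_box E (w n)" and w_sum: "\<And>n. (\<Sum>e\<in>E. w n e) = 1"
    and p_lim: "\<And>e. e \<in> E \<Longrightarrow> (\<lambda>n. p n e) \<longlonglongrightarrow> p0 e"
    and residual: "\<And>e. e \<in> E \<Longrightarrow> (\<lambda>n. nb_transfer E (p n) (w n) e - w n e) \<longlonglongrightarrow> 0"
  obtains W where "\<forall>e\<in>E. 0 \<le> W e" "(\<Sum>e\<in>E. W e) = 1" "\<forall>e\<in>E. nb_transfer E p0 W e = W e"
proof -
  obtain r where r: "strict_mono r" "\<forall>e\<in>E. convergent (\<lambda>n. w (r n) e)"
    using finite_family_convergent_subseq[OF fin, of w 1] w_box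
    unfolding in_unit_box_def by fastforce
  define W where "W e = lim (\<lambda>n. w (r n) e)" for e
  have w_lim: "(\<lambda>n. w (r n) e) \<longlonglongrightarrow> W e" if "e \<in> E" for e
    using r(2) that unfolding W_def convergent_LIMSEQ_iff by blast
  have subseq: "(\<lambda>n. f (r n)) \<longlonglongrightarrow> l" if "f \<longlonglongrightarrow> l" for f :: "nat \<Rightarrow> real" and l
    using LIMSEQ_subseq_LIMSEQ[OF that r(1)] by (simp add: o_def)
  have "\<forall>e\<in>E. 0 \<le> W e"
    using w_lim w_box unfolding in_unit_box_def by (meson LIMSEQ_le_const)
  moreover have "(\<lambda>n. \<Sum>e\<in>E. w (r n) e) \<longlonglongrightarrow> (\<Sum>e\<in>E. W e)"
    by (intro tendsto_sum w_lim)
  then have "(\<Sum>e\<in>E. W e) = 1"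
    by (simp add: w_sum LIMSEQ_const_iff)
  moreover have "nb_transfer E p0 W e = W e" if e: "e \<in> E" for e
  proof -
    have "(\<lambda>n. nb_transfer E (p (r n)) (w (r n)) e) \<longlonglongrightarrow> nb_transfer E p0 W e"
      unfolding nb_transfer_def
      by (intro tendsto_sum tendsto_mult subseq p_lim w_lim) (auto dest: in_nb_predsD)
    from tendsto_diff[OF this subseq[OF residual[OF e]]]
    have "(\<lambda>n. w (r n) e) \<longlonglongrightarrow> nb_transfer E p0 W e"
      by simp
    then show ?thesis
      using w_lim[OF e] by (rule LIMSEQ_unique)
  qed
  ultimately show ?thesis
    using that by blast
qed

lemma defect_residual_bounds:
  assumes fin: "finite E" and p: "in_unit_box E p" and s: "0 < s"
    and defect: "(\<lambda>e. 1 - Qfix E p e) = (\<lambda>e. s * w e)" and w_sum: "(\<Sum>e\<in>E. w e) \<le> 1"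
  shows "0 \<le> nb_transfer E p w e' - w e'" "nb_transfer E p w e' - w e' \<le> s"
proof -
  define T where "T = nb_transfer E p w e'"
  have "\<forall>e\<in>E. 0 \<le> w e"
    using Qfix_bounds(2)[OF p] fun_cong[OF defect] s
    by (metis diff_ge_0_iff_ge zero_le_mult_iff not_less)
  from nb_transfer_bounds[OF fin p this, of e']
  have T: "0 \<le> T" "T \<le> 1"
    using w_sum unfolding T_def by linarith+
  have lower: "s * T - (s * T)\<^sup>2 \<le> s * w e'" and upper: "s * w e' \<le> s * T"
    using one_minus_Qfix_bounds[OF fin p, of e'] fun_cong[OF defect, of e']
    unfolding defect nb_transfer_scale T_def by simp_all
  have "s * (T - s * T\<^sup>2) = s * T - (s * T)\<^sup>2"
    by (simp add: power2_eq_square algebra_simps)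
  with lower have "s * (T - s * T\<^sup>2) \<le> s * w e'"
    by linarith
  with upper have "T - s * T\<^sup>2 \<le> w e'" "w e' \<le> T"
    using s by (simp_all add: mult_le_cancel_left_pos)
  moreover have "s * T\<^sup>2 \<le> s * 1"
    using T s by (intro mult_left_mono power_le_one) auto
  ultimately show "0 \<le> nb_transfer E p w e' - w e'" "nb_transfer E p w e' - w e' \<le> s"
    unfolding T_def by linarith+
qed

lemma nonneg_fixed_vector_of_Qfix_tendsto_1:
  fixes p :: "nat \<Rightarrow> 'v \<times> 'v \<Rightarrow> real"
  assumes fin: "finite E"
    and p_box: "\<And>n. in_unit_box E (p n)" and p_lim: "\<And>e. e \<in> E \<Longrightarrow> (\<lambda>n. p n e) \<longlonglongrightarrow> p0 e"
    and Q_lim: "\<And>e. e \<in> E \<Longrightarrow> (\<lambda>n. Qfix E (p n) e) \<longlonglongrightarrow> 1"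
    and Q_ne_1: "\<And>n. \<exists>e\<in>E. Qfix E (p n) e \<noteq> 1"
  obtains W where "\<forall>e\<in>E. 0 \<le> W e" "(\<Sum>e\<in>E. W e) = 1" "\<forall>e\<in>E. nb_transfer E p0 W e = W e"
proof -
  define s where "s n = (\<Sum>e\<in>E. 1 - Qfix E (p n) e)" for n
  define w where "w n e = (1 - Qfix E (p n) e) / s n" for n e
  have defect_le_s: "1 - Qfix E (p n) e \<le> s n" if "e \<in> E" for n e
    unfolding s_def using fin that Qfix_bounds[OF p_box] by (intro member_le_sum) auto
  have s_pos: "0 < s n" for n
  proof -
    obtain e where "e \<in> E" "Qfix E (p n) e \<noteq> 1"
      using Q_ne_1 by blast
    then show ?thesis
      using defect_le_s[of e n] Qfix_bounds(2)[OF p_box, of n e] by auto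
  qed
  have defect: "(\<lambda>e. 1 - Qfix E (p n) e) = (\<lambda>e. s n * w n e)" for n
    using s_pos[of n] unfolding w_def by auto
  have w_box: "in_unit_box E (w n)" for n
    using defect_le_s s_pos Qfix_bounds(2)[OF p_box]
    unfolding w_def in_unit_box_def by (simp add: less_imp_le)
  have w_sum: "(\<Sum>e\<in>E. w n e) = 1" for n
    using s_pos[of n] unfolding w_def s_def by (simp add: sum_divide_distrib[symmetric])
  have s_lim: "s \<longlonglongrightarrow> 0"
  proof -
    have "(\<lambda>n. \<Sum>e\<in>E. 1 - Qfix E (p n) e) \<longlonglongrightarrow> (\<Sum>e\<in>E. 1 - 1)"
      by (intro tendsto_sum tendsto_diff tendsto_const Q_lim)
    then show ?thesis
      unfolding s_def by simp
  qed
  note residual = defect_residual_bounds[OF fin p_box s_pos defect w_sum[THEN eq_refl]]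
  have "(\<lambda>n. nb_transfer E (p n) (w n) e - w n e) \<longlonglongrightarrow> 0" for e
  proof (rule tendsto_sandwich[of "\<lambda>_. 0" _ _ s])
    show "\<forall>\<^sub>F n in sequentially. 0 \<le> nb_transfer E (p n) (w n) e - w n e"
      using residual(1) by (intro always_eventually allI)
    show "\<forall>\<^sub>F n in sequentially. nb_transfer E (p n) (w n) e - w n e \<le> s n"
      using residual(2) by (intro always_eventually allI)
  qed (simp_all add: s_lim)
  from fixed_vector_of_asymptotic_fixed_vectors[OF fin w_box w_sum p_lim this]
  show ?thesis
    using that by blast
qed

section \<open>A nontrivial least fixed point at the limit parameter\<close>

lemma funpow_Fmap_less_of_strict_supersolution:
  assumes fin: "finite E" and irr: "hashimoto_irreducible E"
    and p: "\<forall>e\<in>E. 0 < p e \<and> p e \<le> 1" and x_pos: "\<forall>e\<in>E. 0 < x e"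
    and super: "\<forall>e\<in>E. Fmap E p x e \<le> x e"
    and e2: "e2 \<in> E" and strict: "Fmap E p x e2 < x e2"
  obtains N where "0 < N" "\<forall>e\<in>E. (Fmap E p ^^ N) x e < x e"
proof -
  have box: "in_unit_box E p"
    using p unfolding in_unit_box_def by auto
  have x_nonneg: "\<forall>e\<in>E. 0 \<le> x e"
    using x_pos by (simp add: less_imp_le)
  define y where "y m = (Fmap E p ^^ m) x" for m
  have y_le: "y m' e \<le> y m e" if "m \<le> m'" "e \<in> E" for m m' e
    using funpow_Fmap_antimono(2)[OF box x_nonneg super that] unfolding y_def .
  have y_bounds: "\<forall>e\<in>E. 0 \<le> y m e \<and> y m e \<le> x e" for m
    using funpow_Fmap_antimono[OF box x_nonneg super, of 0 m] unfolding y_def by simp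
  have "\<exists>m. y m e < x e" if e: "e \<in> E" for e
  proof (rule hashimoto_irreducible_propagate[OF irr e2, where P = "\<lambda>e. \<exists>m. y m e < x e"])
    show "\<exists>m. y m e2 < x e2"
      using strict unfolding y_def by (metis funpow_0 funpow_Suc_right o_apply)
  next
    fix e e'
    assume e': "e' \<in> E" and pred: "e \<in> nb_preds E e'" and "\<exists>m. y m e < x e"
    then obtain m where "y m e < x e"
      by blast
    from Fmap_less_of_less_pred[OF fin p y_bounds x_pos pred this]
    have "y (Suc m) e' < Fmap E p x e'"
      unfolding y_def by simp
    moreover have "Fmap E p x e' \<le> x e'"
      using super e' by blast
    ultimately show "\<exists>m. y m e' < x e'"
      by (meson less_le_trans)
  qed (use e in simp)
  then obtain m where m: "\<forall>e\<in>E. y (m e) e < x e"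
    by metis
  define N where "N = Suc (\<Sum>e\<in>E. m e)"
  have "y N e < x e" if e: "e \<in> E" for e
  proof -
    have "m e \<le> N"
      using member_le_sum[of e E m] fin e unfolding N_def by simp
    then show ?thesis
      using y_le[OF _ e] m e by (meson le_less_trans)
  qed
  then show ?thesis
    using that[of N] unfolding y_def N_def by simp
qed

lemma eventually_Qfix_le:
  fixes p :: "'b \<Rightarrow> 'v \<times> 'v \<Rightarrow> real"
  assumes fin: "finite E" and N: "0 < N"
    and x_nonneg: "\<forall>e\<in>E. 0 \<le> x e" and strict: "\<forall>e\<in>E. (Fmap E p0 ^^ N) x e < x e"
    and p_box: "eventually (\<lambda>l. in_unit_box E (p l)) F"
    and p_lim: "\<forall>e\<in>E. ((\<lambda>l. p l e) \<longlongrightarrow> p0 e) F"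
  shows "eventually (\<lambda>l. \<forall>e\<in>E. Qfix E (p l) e \<le> x e) F"
proof -
  have "eventually (\<lambda>l. (Fmap E (p l) ^^ N) x e < x e) F" if "e \<in> E" for e
    by (rule order_tendstoD(2)[OF tendsto_funpow_Fmap[OF p_lim]]) (use strict that in blast)
  then have "eventually (\<lambda>l. \<forall>e\<in>E. (Fmap E (p l) ^^ N) x e < x e) F"
    by (intro eventually_ball_finite[OF fin] ballI)
  with p_box show ?thesis
  proof eventually_elim
    case (elim l)
    show ?case
    proof
      fix e
      assume "e \<in> E"
      show "Qfix E (p l) e \<le> x e"
        by (rule Qfix_le_of_supersolution[OF elim(1) N x_nonneg _ \<open>e \<in> E\<close>])
           (use elim(2) in \<open>auto intro: less_imp_le\<close>)
    qed
  qed
qed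

lemma exists_small_scale:
  fixes S u :: real
  assumes u: "0 \<le> u" and S: "u < S"
  obtains t where "0 < t" "t \<le> 1 / 2" "t * S\<^sup>2 < S - u"
proof -
  define t where "t = (S - u) / (2 * S\<^sup>2 + 2)"
  have den: "0 < 2 * S\<^sup>2 + 2"
    by (simp add: add_nonneg_pos)
  have "0 \<le> (S - 1)\<^sup>2"
    by simp
  then have "2 * S \<le> S\<^sup>2 + 1"
    by (simp add: power2_eq_square algebra_simps)
  then have "S - u \<le> S\<^sup>2 + 1"
    using S u by linarith
  then have t: "0 < t" "t \<le> 1 / 2"
    using S den unfolding t_def by (simp_all add: divide_le_eq)
  have "S\<^sup>2 / (2 * S\<^sup>2 + 2) < 1"
    using den by (simp add: divide_less_eq)
  then have "(S - u) * (S\<^sup>2 / (2 * S\<^sup>2 + 2)) < (S - u) * 1"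
    using S by (intro mult_strict_left_mono) auto
  then have "t * S\<^sup>2 < S - u"
    unfolding t_def by simp
  with t show ?thesis
    using that by blast
qed

lemma strict_supersolution_of_not_fixed:
  assumes fin: "finite E" and p: "in_unit_box E p" and v: "in_unit_box E v"
    and fixed: "Fmap E p (\<lambda>e. 1 - v e) = (\<lambda>e. 1 - v e)"
    and e: "e \<in> E" and not_fixed: "nb_transfer E p v e \<noteq> v e"
  obtains t where "0 < t" "t \<le> 1 / 2" "\<forall>e\<in>E. Fmap E p (\<lambda>e. 1 - t * v e) e \<le> 1 - t * v e"
    "Fmap E p (\<lambda>e. 1 - t * v e) e < 1 - t * v e"
proof -
  define S where "S = nb_transfer E p v e"
  have "1 - S \<le> 1 - v e"
    using Fmap_one_minus_bounds(1)[OF fin p v, of e] fun_cong[OF fixed, of e]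
    unfolding S_def by simp
  with not_fixed have S: "v e < S"
    unfolding S_def by (simp add: less_le)
  have v_e: "0 \<le> v e"
    using v e unfolding in_unit_box_def by auto
  text \<open>For \<open>t S\<^sup>2 < S - v e\<close> the second-order bound on \<open>F\<close> below becomes strict.\<close>
  obtain t where t: "0 < t" "t \<le> 1 / 2" "t * S\<^sup>2 < S - v e"
    using exists_small_scale[OF v_e S] .
  have super: "Fmap E p (\<lambda>e. 1 - t * v e) e' \<le> 1 - t * v e'" for e'
  proof -
    have "Fmap E p (\<lambda>e. 1 - t * v e) e' \<le> 1 - t + t * (1 - v e')"
      using Fmap_one_minus_scaled_le[OF fin p v, of t e'] t fun_cong[OF fixed, of e'] by simp
    also have "\<dots> = 1 - t * v e'"
      by (simp add: right_diff_distrib)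
    finally show ?thesis .
  qed
  have "in_unit_box E (\<lambda>e. t * v e)"
    using t v unfolding in_unit_box_def by (auto simp: mult_le_one)
  then have "Fmap E p (\<lambda>e. 1 - t * v e) e \<le> 1 - t * S + (t * S)\<^sup>2"
    using Fmap_one_minus_bounds(2)[OF fin p, of "\<lambda>e. t * v e" e]
    unfolding S_def nb_transfer_scale by simp
  also have "\<dots> = 1 - t * S + t * (t * S\<^sup>2)"
    by (simp add: power2_eq_square)
  also have "\<dots> < 1 - t * S + t * (S - v e)"
    using t by simp
  also have "\<dots> = 1 - t * v e"
    by (simp add: right_diff_distrib)
  finally show ?thesis
    using that t super by blast
qed

lemma one_minus_Qfix_pos_fixed_vector:
  fixes p :: "'b \<Rightarrow> 'v \<times> 'v \<Rightarrow> real"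
  assumes fin: "finite E" and irr: "hashimoto_irreducible E" and F: "F \<noteq> bot"
    and p_box: "eventually (\<lambda>l. in_unit_box E (p l)) F"
    and p_lim: "\<forall>e\<in>E. ((\<lambda>l. p l e) \<longlongrightarrow> p0 e) F"
    and p0: "\<forall>e\<in>E. 0 < p0 e \<and> p0 e \<le> 1"
    and Q_lim: "\<forall>e\<in>E. ((\<lambda>l. Qfix E (p l) e) \<longlongrightarrow> 1) F"
    and e1: "e1 \<in> E" "Qfix E p0 e1 \<noteq> 1"
  shows "\<forall>e\<in>E. 0 < 1 - Qfix E p0 e"
    and "\<forall>e\<in>E. nb_transfer E p0 (\<lambda>e. 1 - Qfix E p0 e) e = 1 - Qfix E p0 e"
proof -
  define v where "v e = 1 - Qfix E p0 e" for e
  have box: "in_unit_box E p0"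
    using p0 unfolding in_unit_box_def by auto
  have v_box: "in_unit_box E v"
    using Qfix_bounds[OF box] unfolding v_def in_unit_box_def by simp
  show v_pos: "\<forall>e\<in>E. 0 < 1 - Qfix E p0 e"
    using one_minus_Qfix_pos[OF fin irr p0 e1] by blast
  have fixed: "Fmap E p0 (\<lambda>e. 1 - v e) = (\<lambda>e. 1 - v e)"
    unfolding v_def using Fmap_Qfix[OF box] by simp
  show "\<forall>e\<in>E. nb_transfer E p0 (\<lambda>e. 1 - Qfix E p0 e) e = 1 - Qfix E p0 e"
  proof (rule ccontr)
    assume "\<not> ?thesis"
    then obtain e where e: "e \<in> E" "nb_transfer E p0 v e \<noteq> v e"
      unfolding v_def by blast
    then obtain t where t: "0 < t" "t \<le> 1 / 2"
      and super: "\<forall>e\<in>E. Fmap E p0 (\<lambda>e. 1 - t * v e) e \<le> 1 - t * v e"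
      and strict: "Fmap E p0 (\<lambda>e. 1 - t * v e) e < 1 - t * v e"
      using strict_supersolution_of_not_fixed[OF fin box v_box fixed] by blast
    have "t * v e' \<le> 1 / 2 * 1" if "e' \<in> E" for e'
      using t v_box that unfolding in_unit_box_def by (intro mult_mono) auto
    then have x_pos: "\<forall>e\<in>E. 0 < 1 - t * v e"
      by fastforce
    obtain N where N: "0 < N" "\<forall>e\<in>E. (Fmap E p0 ^^ N) (\<lambda>e. 1 - t * v e) e < 1 - t * v e"
      using funpow_Fmap_less_of_strict_supersolution[OF fin irr p0 x_pos super e(1) strict] by blast
    have "1 - t * v e < 1"
      using t v_pos e(1) unfolding v_def by simp
    have "eventually (\<lambda>l. \<forall>e\<in>E. Qfix E (p l) e \<le> 1 - t * v e) F"
      using eventually_Qfix_le[OF fin N(1) _ N(2) p_box p_lim] x_pos by (simp add: less_imp_le)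
    moreover have "eventually (\<lambda>l. 1 - t * v e < Qfix E (p l) e) F"
      using order_tendstoD(1)[OF Q_lim[rule_format, OF e(1)] \<open>1 - t * v e < 1\<close>] .
    ultimately have "eventually (\<lambda>l. False) F"
    proof eventually_elim
      case (elim l)
      then show False
        using e(1) by (meson bspec not_le)
    qed
    with F show False
      by (simp add: eventually_False)
  qed
qed

lemma at_within_Icc_neq_bot:
  fixes x :: real
  assumes "a \<le> x" "x < b"
  shows "at x within {a..b} \<noteq> bot"
proof (cases "x = a")
  case True
  then show ?thesis
    using assms at_within_Icc_at_right[of a b] trivial_limit_at_right_real by simp
next
  case False
  then show ?thesis
    using assms at_within_Icc_at[of a x b] by simp
qed

theorem lemma3:
  fixes E :: "('v \<times> 'v) set"
    and p :: "real \<Rightarrow> ('v \<times> 'v \<Rightarrow> real)"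
    and lc :: real
    and ls :: "nat \<Rightarrow> real"
  assumes finE: "finite E"
    and irr: "hashimoto_irreducible E"
    and p_cont: "\<forall>e\<in>E. continuous_on {0..1} (\<lambda>l. p l e)"
    and p_range: "\<forall>l\<in>{0..1}. \<forall>e\<in>E. p l e \<in> {0<..1}"
    and lc_range: "0 \<le> lc" "lc < 1"
    and Q_to_1: "\<forall>e\<in>E. ((\<lambda>l. Qfix E (p l) e) \<longlongrightarrow> 1) (at lc within {0..1})"
    and ls_range: "\<forall>n. ls n \<in> {0..1}"
    and ls_lim: "ls \<longlonglongrightarrow> lc"
    and ls_nontriv: "\<forall>n. \<exists>e\<in>E. Qfix E (p (ls n)) e \<noteq> 1"
  shows "rho_BTp E (p lc) = 1"
proof -
  have lc01: "lc \<in> {0..1}"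
    using lc_range by simp
  have p_lc: "\<forall>e\<in>E. 0 < p lc e \<and> p lc e \<le> 1"
    using p_range lc01 by auto
  have p_box: "in_unit_box E (p l)" if "l \<in> {0..1}" for l
    using p_range that unfolding in_unit_box_def by fastforce
  have p_lim: "\<forall>e\<in>E. ((\<lambda>l. p l e) \<longlongrightarrow> p lc e) (at lc within {0..1})"
    using p_cont lc01 unfolding continuous_on_def by blast
  obtain v where v_pos: "\<forall>e\<in>E. 0 < v e" and v_fixed: "\<forall>e\<in>E. nb_transfer E (p lc) v e = v e"
  proof (cases "\<exists>n. ls n = lc")
    case True
    then obtain e1 where e1: "e1 \<in> E" "Qfix E (p lc) e1 \<noteq> 1"
      using ls_nontriv by metis
    have "eventually (\<lambda>l. l \<in> {0..1}) (at lc within {0..1})"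
      by (simp add: eventually_at_filter)
    then have "eventually (\<lambda>l. in_unit_box E (p l)) (at lc within {0..1})"
      by (rule eventually_mono) (rule p_box)
    from one_minus_Qfix_pos_fixed_vector[OF finE irr at_within_Icc_neq_bot[OF lc_range]
        this p_lim p_lc Q_to_1 e1]
    show ?thesis
      using that[of "\<lambda>e. 1 - Qfix E (p lc) e"] by blast
  next
    case False
    then have ls_at: "filterlim ls (at lc within {0..1}) sequentially"
      using ls_lim ls_range by (simp add: filterlim_at)
    have "(\<lambda>n. p (ls n) e) \<longlonglongrightarrow> p lc e" "(\<lambda>n. Qfix E (p (ls n)) e) \<longlonglongrightarrow> 1" if "e \<in> E" for e
      using p_lim Q_to_1 that filterlim_compose[OF _ ls_at] by blast+
    then obtain W where W: "\<forall>e\<in>E. 0 \<le> W e" "(\<Sum>e\<in>E. W e) = 1"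
        "\<forall>e\<in>E. nb_transfer E (p lc) W e = W e"
      using nonneg_fixed_vector_of_Qfix_tendsto_1[of E "\<lambda>n. p (ls n)"] finE p_box ls_range
        ls_nontriv by blast
    moreover have "\<exists>e\<in>E. W e \<noteq> 0"
      using W(2) sum.neutral[of E W] by (metis zero_neq_one)
    ultimately show ?thesis
      using that nb_transfer_fixed_vector_pos[OF finE irr] p_lc by blast
  qed
  moreover have "E \<noteq> {}"
    using ls_nontriv by blast
  ultimately show ?thesis
    using rho_BTp_eq_1_of_pos_eigenvector[OF finE] p_lc by (simp add: less_imp_le)
qed

end
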